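(* Let $q$ be a prime power and $4\le h\le k$ integers. Let $1\le s\le h$, let $i_1,\ldots,i_s$ be distinct indices in $\{1,\ldots,h\}$ and $a_{i_1},\ldots,a_{i_s}\in\mathbb{F}_q^*$. Suppose the coefficients $a_{i_1},\ldots,a_{i_s}$ take exactly $l\ge 1$ distinct values, taken $r_1,\ldots,r_l\ge 1$ times respectively (so $r_1+\cdots+r_l=s$). Let $\Lambda$ be the number of $(x_1,\ldots,x_k)\in\mathbb{F}_q^k$ satisfying $$a_{i_1}x_{i_1}+\cdots+a_{i_s}x_{i_s}=0\quad\text{and}\quad (x_1+\cdots+x_h)\,x_1x_2\cdots x_h=0.$$ Then $$\Lambda=q^{k-1}-(q-1)^{h-s}q^{k-h}\psi_{s}+q^{k-h}A_{r_1,\ldots,r_l,h-s}.$$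
   Context: For $m\ge 0$, $\psi_m$ is the number of $(x_1,\ldots,x_m)\in\mathbb{F}_q^m$ with $\sum x_i=0$ and all $x_i\ne0$; $\varphi_m$ is the number of such tuples with $\sum x_i=1$ and all $x_i\ne 0$ ($\psi_0=1$, $\varphi_0=0$). For positive integers $r_1,\ldots,r_m$ define recursively $A_{r_1}=\psi_{r_1}$ and $A_{r_1,\ldots,r_m}=\psi_{r_1+\cdots+r_{m-1}}\varphi_{r_m}+(-1)^{r_m}A_{r_1,\ldots,r_{m-1}}$ for $m\ge 2$; moreover, for positive $r_1,\ldots,r_l$, the symbol $A_{r_1,\ldots,r_l,0}$ denotes $A_{r_1,\ldots,r_l}$. *)

theory Defs
  imports "HOL-Library.FuncSet"
begin

definition psi :: "'a::{finite,field} itself \<Rightarrow> nat \<Rightarrow> int" where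
  "psi T m = int (card {x \<in> {..<m} \<rightarrow>\<^sub>E (UNIV::'a set).
       (\<Sum>i<m. x i) = 0 \<and> (\<forall>i<m. x i \<noteq> 0)})"

definition phi :: "'a::{finite,field} itself \<Rightarrow> nat \<Rightarrow> int" where
  "phi T m = int (card {x \<in> {..<m} \<rightarrow>\<^sub>E (UNIV::'a set).
       (\<Sum>i<m. x i) = 1 \<and> (\<forall>i<m. x i \<noteq> 0)})"

text \<open>Recursion on the reversed list: Arev T [r_m, ..., r_1] = A_{r_1,...,r_m}.\<close>
fun Arev :: "'a::{finite,field} itself \<Rightarrow> nat list \<Rightarrow> int" where
  "Arev T [] = 0"
| "Arev T [r] = psi T r"
| "Arev T (r # r' # rs) = psi T (sum_list (r' # rs)) * phi T r + (-1) ^ r * Arev T (r' # rs)"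

definition A :: "'a::{finite,field} itself \<Rightarrow> nat list \<Rightarrow> int" where
  "A T rs = Arev T (rev rs)"

definition A_ext :: "'a::{finite,field} itself \<Rightarrow> nat list \<Rightarrow> nat \<Rightarrow> int" where
  "A_ext T rs t = (if t = 0 then A T rs else A T (rs @ [t]))"

end

theory Submission
  imports Defs
begin

(* The coordinates beyond h are free and contribute the factor q^(k-h).  On the first h
   coordinates, (x_1 + ... + x_h) x_1 ... x_h = 0 fails exactly when all x_i are nonzero and
   their sum is nonzero.  So the count is: the solutions of the linear equation (q^(h-1)),
   minus those with all coordinates nonzero ((q-1)^(h-s) psi_s, after rescaling x_i by a_i),
   plus those with all coordinates nonzero and coordinate sum 0.
   For the last count, subtracting a common value v from all coefficients does not change the
   system.  Taking v to be the coefficient of one block G, the coordinates in G enter only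
   through their sum, which must be minus the sum of the remaining coordinates; there are
   psi_|G| or phi_|G| ways for this, according as that sum vanishes or not.  Since
   psi_n - phi_n = (-1)^n, this yields the recursion defining A, with the block of zero
   coefficients (of size h - s) peeled off first. *)

lemma card_filter_bij_betw_prod:
  assumes "bij_betw (\<lambda>(y, z). m y z) (Y \<times> Z) X" "finite Y" "finite Z"
  shows "card {x \<in> X. P x} = (\<Sum>y\<in>Y. card {z \<in> Z. P (m y z)})"
proof -
  have "bij_betw (\<lambda>(y, z). m y z) (SIGMA y:Y. {z \<in> Z. P (m y z)}) {x \<in> X. P x}"
    by (rule bij_betw_subset[OF assms(1)]) (use bij_betw_imp_surj_on[OF assms(1)] in auto)
  then have "card {x \<in> X. P x} = card (SIGMA y:Y. {z \<in> Z. P (m y z)})"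
    by (simp add: bij_betw_same_card)
  also have "\<dots> = (\<Sum>y\<in>Y. card {z \<in> Z. P (m y z)})"
    using assms(2,3) by (simp add: card_SigmaI)
  finally show ?thesis .
qed

lemma bij_betw_PiE_insert:
  assumes "j \<notin> I"
  shows "bij_betw (\<lambda>(y, t). y(j := t)) (Pi\<^sub>E I B \<times> B j) (Pi\<^sub>E (insert j I) B)"
proof (rule bij_betw_byWitness[where f' = "\<lambda>x. (x(j := undefined), x j)"], goal_cases)
  case 1
  show ?case using assms by (auto simp: fun_eq_iff PiE_def extensional_def)
next
  case 2
  show ?case by simp
next
  case 3
  show ?case unfolding image_subset_iff by (simp add: PiE_fun_upd)
next
  case 4
  show ?case using assms by (auto intro: fun_upd_in_PiE)
qed

lemma bij_betw_PiE_Un: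
  assumes "I \<inter> J = {}"
  shows "bij_betw (\<lambda>(y, z) i. if i \<in> I then y i else z i)
           (Pi\<^sub>E I B \<times> Pi\<^sub>E J B) (Pi\<^sub>E (I \<union> J) B)"
proof (rule bij_betw_byWitness[where f' = "\<lambda>x. (restrict x I, restrict x J)"], goal_cases)
  case 1
  show ?case using assms by (auto simp: fun_eq_iff PiE_def extensional_def)
next
  case 2
  show ?case by (auto simp: fun_eq_iff PiE_def extensional_def)
next
  case 3
  show ?case by (auto simp: PiE_def extensional_def)
next
  case 4
  show ?case by auto
qed

lemma card_PiE_insert_filter:
  fixes B :: "nat \<Rightarrow> 'a::finite set"
  assumes "finite I" "j \<notin> I"
  shows "card {x \<in> Pi\<^sub>E (insert j I) B. P x}
       = (\<Sum>y\<in>Pi\<^sub>E I B. card {t \<in> B j. P (y(j := t))})"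
  using card_filter_bij_betw_prod[where m = "\<lambda>y t. y(j := t)",
      OF bij_betw_PiE_insert[OF assms(2), of B], of P] assms(1)
  by (simp add: finite_PiE)

lemma card_PiE_Un_filter:
  fixes B :: "nat \<Rightarrow> 'a::finite set"
  assumes "finite I" "finite J" "I \<inter> J = {}"
  shows "card {x \<in> Pi\<^sub>E (I \<union> J) B. P x}
       = (\<Sum>y\<in>Pi\<^sub>E I B. card {z \<in> Pi\<^sub>E J B. P (\<lambda>i. if i \<in> I then y i else z i)})"
  using card_filter_bij_betw_prod[where m = "\<lambda>y z i. if i \<in> I then y i else z i",
      OF bij_betw_PiE_Un[OF assms(3), of B], of P] assms(1,2)
  by (simp add: finite_PiE)

lemma card_PiE_Un_filter_indep:
  fixes B :: "nat \<Rightarrow> 'a::finite set"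
  assumes "finite I" "finite J" "I \<inter> J = {}"
    and "\<And>y z. y \<in> Pi\<^sub>E I B \<Longrightarrow> z \<in> Pi\<^sub>E J B \<Longrightarrow>
           Q (\<lambda>i. if i \<in> I then y i else z i) = Q y"
  shows "card {x \<in> Pi\<^sub>E (I \<union> J) B. Q x} = card {y \<in> Pi\<^sub>E I B. Q y} * card (Pi\<^sub>E J B)"
proof -
  have "card {x \<in> Pi\<^sub>E (I \<union> J) B. Q x}
      = (\<Sum>y\<in>Pi\<^sub>E I B. of_bool (Q y) * card (Pi\<^sub>E J B))"
  proof (unfold card_PiE_Un_filter[OF assms(1-3)], intro sum.cong refl)
    fix y assume "y \<in> Pi\<^sub>E I B"
    then have "{z \<in> Pi\<^sub>E J B. Q (\<lambda>i. if i \<in> I then y i else z i)} = {z \<in> Pi\<^sub>E J B. Q y}"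
      using assms(4) by blast
    then show "card {z \<in> Pi\<^sub>E J B. Q (\<lambda>i. if i \<in> I then y i else z i)}
        = of_bool (Q y) * card (Pi\<^sub>E J B)"
      by simp
  qed
  also have "\<dots> = card {y \<in> Pi\<^sub>E I B. Q y} * card (Pi\<^sub>E J B)"
    using assms(1) by (simp add: finite_PiE Int_def)
  finally show ?thesis .
qed

lemma card_Collect_imp_subset:
  assumes "finite U" "V \<subseteq> U"
  shows "int (card {x \<in> U. P x \<and> (x \<in> V \<longrightarrow> R x)})
       = int (card {x \<in> U. P x}) - int (card {x \<in> V. P x}) + int (card {x \<in> V. P x \<and> R x})"
proof -
  have fin: "finite V"
    using assms finite_subset by blast
  have sub: "{x \<in> V. P x \<and> \<not> R x} \<subseteq> {x \<in> U. P x}"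
    using assms(2) by blast
  have "{x \<in> U. P x \<and> (x \<in> V \<longrightarrow> R x)} = {x \<in> U. P x} - {x \<in> V. P x \<and> \<not> R x}"
    using assms(2) by blast
  moreover have "card {x \<in> V. P x} = card {x \<in> V. P x \<and> R x} + card {x \<in> V. P x \<and> \<not> R x}"
    using fin by (subst card_Un_disjoint[symmetric]) (auto intro: arg_cong[where f = card])
  ultimately show ?thesis
    using fin sub card_mono[OF _ sub] assms(1) by (simp add: card_Diff_subset of_nat_diff)
qed

definition nonzero_sum_count :: "nat set \<Rightarrow> 'a::{finite,field} \<Rightarrow> nat" where
  "nonzero_sum_count I w = card {x \<in> I \<rightarrow>\<^sub>E - {0}. sum x I = w}"

lemma card_nonzero_funcset:
  "finite I \<Longrightarrow>
    int (card (I \<rightarrow>\<^sub>E (- {0::'a::{finite,zero}}))) = (int (card (UNIV :: 'a set)) - 1) ^ card I"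
  using finite_UNIV_card_ge_0[where 'a = 'a]
  by (simp add: card_funcsetE Compl_eq_Diff_UNIV card_Diff_singleton of_nat_diff Suc_le_eq)

lemma sum_fun_upd_insert:
  assumes "finite I" "j \<notin> I"
  shows "sum (y(j := t)) (insert j I) = t + sum y I"
proof -
  have "sum (y(j := t)) I = sum y I"
    using assms(2) by (intro sum.cong) auto
  then show ?thesis using assms by simp
qed

lemma nonzero_sum_count_insert:
  fixes w :: "'a::{finite,field}"
  assumes "finite I" "j \<notin> I"
  shows "int (nonzero_sum_count (insert j I) w)
       = (int (card (UNIV :: 'a set)) - 1) ^ card I - int (nonzero_sum_count I w)"
proof -
  let ?N = "I \<rightarrow>\<^sub>E (- {0::'a})"
  have fiber: "card {t \<in> - {0}. sum (y(j := t)) (insert j I) = w} = of_bool (sum y I \<noteq> w)" for y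
  proof -
    have "{t \<in> - {0}. sum (y(j := t)) (insert j I) = w} = (if sum y I \<noteq> w then {w - sum y I} else {})"
      unfolding sum_fun_upd_insert[OF assms] by (auto simp: algebra_simps)
    then show ?thesis by simp
  qed
  have "nonzero_sum_count (insert j I) w = card {y \<in> ?N. sum y I \<noteq> w}"
    unfolding nonzero_sum_count_def card_PiE_insert_filter[OF assms] fiber
    using assms(1) by (simp add: finite_PiE Int_def)
  also have "\<dots> = card ?N - nonzero_sum_count I w"
    unfolding nonzero_sum_count_def using assms(1)
    by (subst card_Diff_subset[symmetric]) (auto simp: finite_PiE intro: arg_cong[where f = card])
  finally show ?thesis
    using assms(1) card_mono[of ?N "{y \<in> ?N. sum y I = w}"] card_nonzero_funcset[OF assms(1)]
    by (simp add: of_nat_diff finite_PiE nonzero_sum_count_def)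
qed

lemma nonzero_sum_count_weighted:
  fixes d :: "nat \<Rightarrow> 'a::{finite,field}"
  assumes "\<forall>i\<in>I. d i \<noteq> 0"
  shows "card {x \<in> I \<rightarrow>\<^sub>E - {0}. (\<Sum>i\<in>I. d i * x i) = w} = nonzero_sum_count I w"
  unfolding nonzero_sum_count_def
proof (rule bij_betw_same_card[of "\<lambda>x. restrict (\<lambda>i. d i * x i) I"],
    rule bij_betw_byWitness[where f' = "\<lambda>y. restrict (\<lambda>i. y i / d i) I"], goal_cases)
  case 1
  show ?case using assms by (auto simp: fun_eq_iff PiE_def extensional_def)
next
  case 2
  show ?case using assms by (auto simp: fun_eq_iff PiE_def extensional_def)
next
  case 3
  show ?case using assms by (auto cong: sum.cong)
next
  case 4
  show ?case using assms by (auto simp: PiE_iff cong: sum.cong)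
qed

lemma nonzero_sum_count_scale:
  fixes w :: "'a::{finite,field}"
  assumes "w \<noteq> 0"
  shows "nonzero_sum_count I w = nonzero_sum_count I (1::'a)"
proof -
  have "nonzero_sum_count I w = card {x \<in> I \<rightarrow>\<^sub>E - {0}. (\<Sum>i\<in>I. w * x i) = w}"
    using nonzero_sum_count_weighted[of I "\<lambda>_. w" w] assms by simp
  also have "\<dots> = nonzero_sum_count I (1::'a)"
    unfolding nonzero_sum_count_def using assms by (simp add: sum_distrib_left[symmetric])
  finally show ?thesis .
qed

lemma nonzero_sum_count_eq_lessThan_card:
  "finite I \<Longrightarrow> nonzero_sum_count I w = nonzero_sum_count {..<card I} w"
proof (induction I rule: finite_induct)
  case empty
  then show ?case by simp
next
  case (insert j I)
  have "int (nonzero_sum_count (insert j I) w) = int (nonzero_sum_count (insert (card I) {..<card I}) w)"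
    using insert by (simp add: nonzero_sum_count_insert)
  then show ?case
    using insert by (simp add: lessThan_Suc)
qed

lemma psi_eq_nonzero_sum_count: "psi TYPE('a::{finite,field}) n = int (nonzero_sum_count {..<n} (0::'a))"
  unfolding psi_def nonzero_sum_count_def by (auto simp: PiE_iff intro!: arg_cong[where f = card])

lemma phi_eq_nonzero_sum_count: "phi TYPE('a::{finite,field}) n = int (nonzero_sum_count {..<n} (1::'a))"
  unfolding phi_def nonzero_sum_count_def by (auto simp: PiE_iff intro!: arg_cong[where f = card])

lemma nonzero_sum_count_eq_psi_phi:
  fixes w :: "'a::{finite,field}"
  assumes "finite I"
  shows "int (nonzero_sum_count I w) = (if w = 0 then psi TYPE('a) (card I) else phi TYPE('a) (card I))"
  using nonzero_sum_count_eq_lessThan_card[OF assms, of w]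
    nonzero_sum_count_eq_lessThan_card[OF assms, of "1::'a"] nonzero_sum_count_scale[of w I]
  by (simp add: psi_eq_nonzero_sum_count phi_eq_nonzero_sum_count)

lemma psi_minus_phi: "psi TYPE('a::{finite,field}) n - phi TYPE('a) n = (-1) ^ n"
proof (induction n)
  case 0
  then show ?case
    by (simp add: psi_eq_nonzero_sum_count phi_eq_nonzero_sum_count nonzero_sum_count_def)
next
  case (Suc n)
  then show ?case
    by (simp add: psi_eq_nonzero_sum_count phi_eq_nonzero_sum_count lessThan_Suc nonzero_sum_count_insert)
qed

definition nonzero_solution_count :: "nat set \<Rightarrow> (nat \<Rightarrow> 'a::{finite,field}) \<Rightarrow> nat" where
  "nonzero_solution_count I c =
     card {x \<in> I \<rightarrow>\<^sub>E - {0}. (\<Sum>i\<in>I. c i * x i) = 0 \<and> sum x I = 0}"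

lemma nonzero_solution_count_shift:
  "nonzero_solution_count I (\<lambda>i. c i - v) = nonzero_solution_count I c"
proof -
  have "(\<Sum>i\<in>I. (c i - v) * x i) = (\<Sum>i\<in>I. c i * x i) - v * sum x I" for x
    by (simp add: algebra_simps sum_subtractf sum_distrib_left)
  then show ?thesis
    unfolding nonzero_solution_count_def by (metis (no_types, lifting) diff_zero mult_zero_right)
qed

lemma nonzero_solution_count_Un:
  fixes d :: "nat \<Rightarrow> 'a::{finite,field}"
  assumes "finite I" "finite G" "I \<inter> G = {}" "\<forall>i\<in>I. d i \<noteq> 0" "\<forall>i\<in>G. d i = 0"
  shows "int (nonzero_solution_count (I \<union> G) d)
       = psi TYPE('a) (card I) * phi TYPE('a) (card G) + (-1) ^ card G * int (nonzero_solution_count I d)"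
proof -
  let ?N = "I \<rightarrow>\<^sub>E (- {0::'a})"
  let ?L = "\<lambda>y. (\<Sum>i\<in>I. d i * y i) = 0"
  let ?g = "card G"
  have fiber: "int (card {z \<in> G \<rightarrow>\<^sub>E - {0}.
        (\<Sum>i\<in>I \<union> G. d i * (if i \<in> I then y i else z i)) = 0 \<and>
        (\<Sum>i\<in>I \<union> G. if i \<in> I then y i else z i) = 0})
      = of_bool (?L y) * (phi TYPE('a) ?g + of_bool (sum y I = 0) * (-1) ^ ?g)" for y
  proof -
    have "(\<Sum>i\<in>I \<union> G. d i * (if i \<in> I then y i else z i)) = (\<Sum>i\<in>I. d i * y i)" for z
      using assms by (simp add: sum.union_disjoint cong: sum.cong)
    moreover have "(\<Sum>i\<in>I \<union> G. if i \<in> I then y i else z i) = sum y I + sum z G" for z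
    proof -
      have "(\<Sum>i\<in>G. if i \<in> I then y i else z i) = sum z G"
        using assms(3) by (intro sum.cong) auto
      then show ?thesis
        using assms by (simp add: sum.union_disjoint cong: sum.cong)
    qed
    ultimately have "{z \<in> G \<rightarrow>\<^sub>E - {0}.
        (\<Sum>i\<in>I \<union> G. d i * (if i \<in> I then y i else z i)) = 0 \<and>
        (\<Sum>i\<in>I \<union> G. if i \<in> I then y i else z i) = 0}
      = {z \<in> G \<rightarrow>\<^sub>E - {0}. ?L y \<and> sum z G = - sum y I}"
      by (auto simp: eq_neg_iff_add_eq_0 add.commute)
    then show ?thesis
      using nonzero_sum_count_eq_psi_phi[OF assms(2), of "- sum y I"] psi_minus_phi[where 'a = 'a, of ?g]
      by (auto simp: nonzero_sum_count_def)
  qed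
  have "int (nonzero_solution_count (I \<union> G) d)
      = (\<Sum>y\<in>?N. of_bool (?L y) * (phi TYPE('a) ?g + of_bool (sum y I = 0) * (-1) ^ ?g))"
    unfolding nonzero_solution_count_def card_PiE_Un_filter[OF assms(1-3)] of_nat_sum fiber ..
  also have "\<dots> = (\<Sum>y\<in>?N. of_bool (?L y)) * phi TYPE('a) ?g
      + (\<Sum>y\<in>?N. of_bool (?L y \<and> sum y I = 0)) * (-1) ^ ?g"
    by (simp add: distrib_left sum.distrib sum_distrib_left sum_distrib_right of_bool_conj
        mult.commute mult.left_commute)
  also have "(\<Sum>y\<in>?N. of_bool (?L y)) = psi TYPE('a) (card I)"
    using nonzero_sum_count_weighted[of I d 0] nonzero_sum_count_eq_psi_phi[OF assms(1), of 0] assms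
    by (simp add: finite_PiE Int_def)
  also have "(\<Sum>y\<in>?N. of_bool (?L y \<and> sum y I = 0)) = int (nonzero_solution_count I d)"
    using assms(1) by (simp add: finite_PiE Int_def nonzero_solution_count_def)
  finally show ?thesis by simp
qed

lemma Arev_Cons_0: "rs \<noteq> [] \<Longrightarrow> Arev T (0 # rs) = Arev T rs"
  by (cases rs) (simp_all add: phi_def)

lemma A_ext_eq_Arev: "rs \<noteq> [] \<Longrightarrow> A_ext T rs t = Arev T (t # rev rs)"
  unfolding A_ext_def A_def by (simp add: Arev_Cons_0)

lemma sum_list_map_card_fiber:
  assumes "distinct vs" "finite I" "c ` I \<subseteq> set vs"
  shows "sum_list (map (\<lambda>v. card {i \<in> I. c i = v}) vs) = card I"
proof -
  have "sum_list (map (\<lambda>v. card {i \<in> I. c i = v}) vs) = (\<Sum>v\<in>set vs. card {i \<in> I. c i = v})"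
    using assms(1) by (rule sum_list_distinct_conv_sum_set)
  also have "\<dots> = card (\<Union>v\<in>set vs. {i \<in> I. c i = v})"
    using assms(2) by (intro card_UN_disjoint[symmetric]) auto
  also have "(\<Union>v\<in>set vs. {i \<in> I. c i = v}) = I"
    using assms(3) by auto
  finally show ?thesis .
qed

lemma nonzero_solution_count_split_value:
  fixes c :: "nat \<Rightarrow> 'a::{finite,field}"
  assumes "finite I"
  shows "int (nonzero_solution_count I c)
       = psi TYPE('a) (card {i \<in> I. c i \<noteq> v}) * phi TYPE('a) (card {i \<in> I. c i = v})
         + (-1) ^ card {i \<in> I. c i = v} * int (nonzero_solution_count {i \<in> I. c i \<noteq> v} c)"
proof -
  let ?I' = "{i \<in> I. c i \<noteq> v}" and ?G = "{i \<in> I. c i = v}"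
  have "I = ?I' \<union> ?G"
    by auto
  then have "int (nonzero_solution_count I c) = int (nonzero_solution_count (?I' \<union> ?G) (\<lambda>i. c i - v))"
    by (simp add: nonzero_solution_count_shift)
  also have "\<dots> = psi TYPE('a) (card ?I') * phi TYPE('a) (card ?G)
      + (-1) ^ card ?G * int (nonzero_solution_count ?I' (\<lambda>i. c i - v))"
    using assms by (intro nonzero_solution_count_Un) auto
  finally show ?thesis
    by (simp add: nonzero_solution_count_shift)
qed

lemma nonzero_solution_count_eq_Arev:
  fixes c :: "nat \<Rightarrow> 'a::{finite,field}"
  assumes "distinct vs" "vs \<noteq> []" "finite I" "c ` I \<subseteq> set vs"
  shows "int (nonzero_solution_count I c) = Arev TYPE('a) (map (\<lambda>v. card {i \<in> I. c i = v}) vs)"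
  using assms
proof (induction vs arbitrary: I)
  case Nil
  then show ?case by simp
next
  case (Cons v vs)
  define I' where "I' = {i \<in> I. c i \<noteq> v}"
  note split = nonzero_solution_count_split_value[OF Cons.prems(3), of c v, folded I'_def]
  show ?case
  proof (cases "vs = []")
    case True
    then have "I' = {}" "{i \<in> I. c i = v} = I"
      using Cons.prems(4) by (auto simp: I'_def)
    then show ?thesis
      using split psi_minus_phi[where 'a = 'a, of "card I"] True
      by (simp add: nonzero_solution_count_def psi_def algebra_simps)
  next
    case False
    have fin: "finite I'" and sub: "c ` I' \<subseteq> set vs"
      using Cons.prems(3,4) by (auto simp: I'_def)
    have map_eq: "map (\<lambda>u. card {i \<in> I'. c i = u}) vs = map (\<lambda>u. card {i \<in> I. c i = u}) vs"
      using Cons.prems(1) by (intro map_cong refl arg_cong[where f = card]) (auto simp: I'_def)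
    have "int (nonzero_solution_count I' c) = Arev TYPE('a) (map (\<lambda>u. card {i \<in> I. c i = u}) vs)"
      using Cons.IH[of I'] Cons.prems(1) False fin sub map_eq by simp
    moreover have "sum_list (map (\<lambda>u. card {i \<in> I. c i = u}) vs) = card I'"
      using sum_list_map_card_fiber[of vs I' c] Cons.prems(1) fin sub map_eq by simp
    moreover obtain u us where "vs = u # us"
      using False by (cases vs) auto
    ultimately show ?thesis
      using split by simp
  qed
qed

lemma nonzero_solution_count_eq_A_ext:
  fixes a :: "nat \<Rightarrow> 'a::{finite,field}"
  assumes "finite H" "S \<subseteq> H" "S \<noteq> {}" "\<forall>i\<in>S. a i \<noteq> 0"
    and "distinct vs" "set vs = a ` S" "r = map (\<lambda>v. card {i \<in> S. a i = v}) vs"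
  shows "int (nonzero_solution_count H (\<lambda>i. if i \<in> S then a i else 0))
       = A_ext TYPE('a) r (card H - card S)"
proof -
  let ?c = "\<lambda>i. if i \<in> S then a i else 0"
  have "vs \<noteq> []" "0 \<notin> set vs"
    using assms(3,4,6) by auto
  have "map (\<lambda>v. card {i \<in> H. ?c i = v}) (0 # rev vs) = (card H - card S) # rev r"
  proof -
    have "{i \<in> H. ?c i = 0} = H - S"
      using assms(4) by auto
    moreover have "{i \<in> H. ?c i = v} = {i \<in> S. a i = v}" if "v \<in> set vs" for v
      using that \<open>0 \<notin> set vs\<close> assms(2) by auto
    ultimately show ?thesis
      using assms(1,2,7) finite_subset[OF assms(2,1)] by (simp add: card_Diff_subset rev_map)
  qed
  moreover have "int (nonzero_solution_count H ?c)
      = Arev TYPE('a) (map (\<lambda>v. card {i \<in> H. ?c i = v}) (0 # rev vs))"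
    using \<open>0 \<notin> set vs\<close> assms(1,5,6) by (intro nonzero_solution_count_eq_Arev) auto
  ultimately show ?thesis
    using \<open>vs \<noteq> []\<close> assms(7) by (simp add: A_ext_eq_Arev)
qed

lemma card_hyperplane:
  fixes c :: "nat \<Rightarrow> 'a::{finite,field}"
  assumes "finite H" "j \<in> H" "c j \<noteq> 0"
  shows "card {x \<in> H \<rightarrow>\<^sub>E UNIV. (\<Sum>i\<in>H. c i * x i) = w} = card (UNIV :: 'a set) ^ (card H - 1)"
proof -
  have fiber: "card {t. (\<Sum>i\<in>H. c i * (y(j := t)) i) = w} = 1" for y
  proof -
    have "(\<Sum>i\<in>H - {j}. c i * (y(j := t)) i) = (\<Sum>i\<in>H - {j}. c i * y i)" for t
      by (intro sum.cong) auto
    then have "(\<Sum>i\<in>H. c i * (y(j := t)) i) = c j * t + (\<Sum>i\<in>H - {j}. c i * y i)" for t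
      using sum.remove[OF assms(1,2), of "\<lambda>i. c i * (y(j := t)) i"] by simp
    then have "{t. (\<Sum>i\<in>H. c i * (y(j := t)) i) = w} = {(w - (\<Sum>i\<in>H - {j}. c i * y i)) / c j}"
      using assms(3) by (auto simp: field_simps)
    then show ?thesis by simp
  qed
  have "card {x \<in> H \<rightarrow>\<^sub>E UNIV. (\<Sum>i\<in>H. c i * x i) = w}
      = (\<Sum>y\<in>(H - {j}) \<rightarrow>\<^sub>E UNIV. card {t. (\<Sum>i\<in>H. c i * (y(j := t)) i) = w})"
    using card_PiE_insert_filter[of "H - {j}" j "\<lambda>_. UNIV :: 'a set" "\<lambda>x. (\<Sum>i\<in>H. c i * x i) = w"]
      assms(1,2)
    by (simp add: insert_absorb)
  also have "\<dots> = card (UNIV :: 'a set) ^ (card H - 1)"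
    using assms(1,2) by (simp only: fiber) (simp add: card_funcsetE)
  finally show ?thesis .
qed

lemma card_nonzero_hyperplane:
  fixes c :: "nat \<Rightarrow> 'a::{finite,field}"
  assumes "finite H"
  shows "int (card {x \<in> H \<rightarrow>\<^sub>E - {0}. (\<Sum>i\<in>H. c i * x i) = 0})
       = (int (card (UNIV :: 'a set)) - 1) ^ card {i \<in> H. c i = 0}
         * psi TYPE('a) (card {i \<in> H. c i \<noteq> 0})"
proof -
  let ?S = "{i \<in> H. c i \<noteq> 0}" and ?Z = "{i \<in> H. c i = 0}"
  have H_eq: "H = ?S \<union> ?Z" and fin: "finite ?S" "finite ?Z"
    using assms by auto
  have sum_S: "(\<Sum>i\<in>H. c i * y i) = (\<Sum>i\<in>?S. c i * y i)" for y
    using assms by (intro sum.mono_neutral_cong_right) auto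
  have "card {x \<in> (?S \<union> ?Z) \<rightarrow>\<^sub>E - {0}. (\<Sum>i\<in>H. c i * x i) = 0}
      = card {y \<in> ?S \<rightarrow>\<^sub>E - {0}. (\<Sum>i\<in>H. c i * y i) = 0} * card (?Z \<rightarrow>\<^sub>E (- {0::'a}))"
  proof (rule card_PiE_Un_filter_indep[OF fin])
    fix y z
    have "(\<Sum>i\<in>H. c i * (if i \<in> ?S then y i else z i)) = (\<Sum>i\<in>H. c i * y i)"
      by (intro sum.cong) auto
    then show "((\<Sum>i\<in>H. c i * (if i \<in> ?S then y i else z i)) = 0) = ((\<Sum>i\<in>H. c i * y i) = 0)"
      by simp
  qed auto
  moreover have "card {y \<in> ?S \<rightarrow>\<^sub>E - {0}. (\<Sum>i\<in>H. c i * y i) = 0} = nonzero_sum_count ?S (0::'a)"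
    unfolding sum_S by (rule nonzero_sum_count_weighted) simp
  ultimately show ?thesis
    using H_eq nonzero_sum_count_eq_psi_phi[OF fin(1), of "0::'a"]
      card_nonzero_funcset[OF fin(2), where 'a = 'a]
    by (simp add: mult.commute)
qed

lemma card_linear_sum_mult_prod_zero:
  fixes c :: "nat \<Rightarrow> 'a::{finite,field}"
  assumes "finite H" "j \<in> H" "c j \<noteq> 0"
  shows "int (card {x \<in> H \<rightarrow>\<^sub>E UNIV. (\<Sum>i\<in>H. c i * x i) = 0 \<and> sum x H * prod x H = 0})
       = int (card (UNIV :: 'a set)) ^ (card H - 1)
         - (int (card (UNIV :: 'a set)) - 1) ^ card {i \<in> H. c i = 0}
           * psi TYPE('a) (card {i \<in> H. c i \<noteq> 0})
         + int (nonzero_solution_count H c)"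
proof -
  let ?V = "H \<rightarrow>\<^sub>E (- {0::'a})"
  have "sum x H * prod x H = 0 \<longleftrightarrow> (x \<in> ?V \<longrightarrow> sum x H = 0)" if "x \<in> H \<rightarrow>\<^sub>E UNIV" for x
    using that assms(1) by (auto simp: PiE_iff)
  then have "{x \<in> H \<rightarrow>\<^sub>E UNIV. (\<Sum>i\<in>H. c i * x i) = 0 \<and> sum x H * prod x H = 0}
      = {x \<in> H \<rightarrow>\<^sub>E UNIV. (\<Sum>i\<in>H. c i * x i) = 0 \<and> (x \<in> ?V \<longrightarrow> sum x H = 0)}"
    by blast
  then show ?thesis
    using card_Collect_imp_subset[of "H \<rightarrow>\<^sub>E UNIV" ?V] assms
      card_hyperplane[of H j c 0] card_nonzero_hyperplane[OF assms(1), of c]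
    by (simp add: finite_PiE PiE_mono nonzero_solution_count_def)
qed


lemma card_solutions_eq_A_ext:
  fixes a :: "nat \<Rightarrow> 'a::{finite,field}"
  assumes "finite H" "S \<subseteq> H" "S \<noteq> {}" "\<forall>i\<in>S. a i \<noteq> 0"
    and "distinct vs" "set vs = a ` S" "r = map (\<lambda>v. card {i \<in> S. a i = v}) vs"
  shows "int (card {x \<in> H \<rightarrow>\<^sub>E UNIV. (\<Sum>i\<in>S. a i * x i) = 0 \<and> sum x H * prod x H = 0})
       = int (card (UNIV :: 'a set)) ^ (card H - 1)
         - (int (card (UNIV :: 'a set)) - 1) ^ (card H - card S) * psi TYPE('a) (card S)
         + A_ext TYPE('a) r (card H - card S)"
proof -
  define c where "c = (\<lambda>i. if i \<in> S then a i else 0)"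
  obtain j where "j \<in> S"
    using assms(3) by blast
  have "(\<Sum>i\<in>S. a i * x i) = (\<Sum>i\<in>H. c i * x i)" for x
    using assms(1,2) by (intro sum.mono_neutral_cong_left) (auto simp: c_def)
  moreover have "{i \<in> H. c i \<noteq> 0} = S" "{i \<in> H. c i = 0} = H - S"
    using assms(2,4) by (auto simp: c_def)
  moreover have "card (H - S) = card H - card S"
    using assms(2) finite_subset[OF assms(2,1)] by (simp add: card_Diff_subset)
  moreover have "j \<in> H" "c j \<noteq> 0"
    using \<open>j \<in> S\<close> assms(2,4) by (auto simp: c_def)
  ultimately show ?thesis
    using assms(1) card_linear_sum_mult_prod_zero[of H j c]
      nonzero_solution_count_eq_A_ext[OF assms, folded c_def]
    by simp
qed

theorem proposition2p4:
  fixes h k s :: nat and S :: "nat set" and a :: "nat \<Rightarrow> 'a::{finite,field}"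
    and vs :: "'a list" and r :: "nat list"
  assumes "4 \<le> h" and "h \<le> k"
    and "S \<subseteq> {1..h}" and "card S = s" and "1 \<le> s"
    and "\<forall>i\<in>S. a i \<noteq> 0"
    and "distinct vs" and "set vs = a ` S"
    and "r = map (\<lambda>v. card {i \<in> S. a i = v}) vs"
  shows "int (card {x \<in> {1..k} \<rightarrow>\<^sub>E (UNIV::'a set).
            (\<Sum>i\<in>S. a i * x i) = 0 \<and> (\<Sum>i=1..h. x i) * (\<Prod>i=1..h. x i) = 0})
       = int (card (UNIV::'a set)) ^ (k - 1)
         - (int (card (UNIV::'a set)) - 1) ^ (h - s) * int (card (UNIV::'a set)) ^ (k - h) * psi TYPE('a) s
         + int (card (UNIV::'a set)) ^ (k - h) * A_ext TYPE('a) r (h - s)"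
proof -
  define H where "H = {1..h}"
  let ?q = "int (card (UNIV::'a set))"
  have "S \<noteq> {}"
    using assms(4,5) by auto
  have k_eq: "{1..k} = H \<union> {Suc h..k}"
    using assms(1,2) by (auto simp: H_def)
  have restrict_to_H: "card {x \<in> {1..k} \<rightarrow>\<^sub>E (UNIV::'a set).
            (\<Sum>i\<in>S. a i * x i) = 0 \<and> (\<Sum>i=1..h. x i) * (\<Prod>i=1..h. x i) = 0}
      = card {x \<in> H \<rightarrow>\<^sub>E UNIV. (\<Sum>i\<in>S. a i * x i) = 0 \<and> sum x H * prod x H = 0}
        * card ({Suc h..k} \<rightarrow>\<^sub>E (UNIV::'a set))"
    unfolding H_def[symmetric] k_eq
  proof (rule card_PiE_Un_filter_indep)
    fix y z :: "nat \<Rightarrow> 'a"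
    have "(\<Sum>i\<in>S. a i * (if i \<in> H then y i else z i)) = (\<Sum>i\<in>S. a i * y i)"
      using assms(3) by (intro sum.cong) (auto simp: H_def)
    then show "((\<Sum>i\<in>S. a i * (if i \<in> H then y i else z i)) = 0 \<and>
        sum (\<lambda>i. if i \<in> H then y i else z i) H * prod (\<lambda>i. if i \<in> H then y i else z i) H = 0)
      = ((\<Sum>i\<in>S. a i * y i) = 0 \<and> sum y H * prod y H = 0)"
      by (simp cong: sum.cong prod.cong)
  qed (auto simp: H_def)
  have count_on_H: "int (card {x \<in> H \<rightarrow>\<^sub>E UNIV. (\<Sum>i\<in>S. a i * x i) = 0 \<and> sum x H * prod x H = 0})
      = ?q ^ (h - 1) - (?q - 1) ^ (h - s) * psi TYPE('a) s + A_ext TYPE('a) r (h - s)"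
    using card_solutions_eq_A_ext[of H S a vs r] \<open>S \<noteq> {}\<close> assms(3-9) by (simp add: H_def)
  have "?q ^ (k - h) * ?q ^ (h - 1) = ?q ^ (k - 1)"
    using assms(1,2) by (simp flip: power_add)
  then show ?thesis
    unfolding restrict_to_H of_nat_mult count_on_H by (simp add: card_funcsetE algebra_simps)
qed

end
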